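(* Let $\mathcal{C}=\{C_3,C_4,C_5,\dots\}$ be the family of all cycles. For every integer $k\geq 2$, $\mathcal{E}_\mathcal{C}(k)=\mathcal{E}^*_\mathcal{C}(k)=\binom{k}{2}$, and the only multigraph $G$ (without isolated vertices) with $\operatorname{ex}(G,\mathcal{C})<k$ and $e(G)=\binom k2$ is $K_k$ (so $K_k$ is also the only extremal graph for $\mathcal{E}_\mathcal{C}(k)$).
   Context: Multigraphs are 2-uniform, may have parallel edges but no loops; $e(\cdot)$ counts edges with multiplicity. A pair of parallel edges is not a member of $\mathcal{C}$. $\operatorname{ex}(G,\mathcal{C})$ is the maximum number of edges of a sub-multigraph of $G$ containing no member of $\mathcal{C}$. $\mathcal{E}_\mathcal{C}(k):=\sup\{e(G): G\text{ simple}, \operatorname{ex}(G,\mathcal{C})<k\}$, $\mathcal{E}^*_\mathcal{C}(k):=\sup\{e(G): G\text{ multigraph}, \operatorname{ex}(G,\mathcal{C})<k\}$. Graphs have no isolated vertices. *)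

theory Defs
  imports Main "HOL-Library.Multiset" "HOL-Library.Extended_Nat"
begin

text \<open>A multigraph (no loops, parallel edges allowed, no isolated vertices) is a
finite multiset of edges, each edge a 2-element vertex set. Its vertex set is the
union of its edges, so there are no isolated vertices. e(G) is size G.\<close>

definition multigraph :: "'a set multiset \<Rightarrow> bool" where
  "multigraph G \<longleftrightarrow> (\<forall>e\<in>#G. card e = 2)"

definition simple_graph :: "'a set multiset \<Rightarrow> bool" where
  "simple_graph G \<longleftrightarrow> multigraph G \<and> (\<forall>e. count G e \<le> 1)"

definition verts :: "'a set multiset \<Rightarrow> 'a set" where
  "verts G = \<Union> (set_mset G)"

definition has_cycle :: "'a set multiset \<Rightarrow> bool" where
  "has_cycle H \<longleftrightarrow> (\<exists>vs::'a list. length vs \<ge> 3 \<and> distinct vs \<and>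
      (\<forall>i < length vs. {vs ! i, vs ! ((i + 1) mod length vs)} \<in># H))"

definition ex_cycles :: "'a set multiset \<Rightarrow> nat" where
  "ex_cycles G = Max {size H | H. H \<subseteq># G \<and> \<not> has_cycle H}"

text \<open>E_C(k) and E*_C(k); graphs taken with vertices in nat (every finite graph is
isomorphic to one such), supremum taken in the extended naturals.\<close>
definition E_cyc :: "nat \<Rightarrow> enat" where
  "E_cyc k = Sup {enat (size G) | G :: nat set multiset. simple_graph G \<and> ex_cycles G < k}"

definition E_cyc_multi :: "nat \<Rightarrow> enat" where
  "E_cyc_multi k = Sup {enat (size G) | G :: nat set multiset. multigraph G \<and> ex_cycles G < k}"

definition is_complete_graph :: "'a set multiset \<Rightarrow> nat \<Rightarrow> bool" where
  "is_complete_graph G k \<longleftrightarrow> simple_graph G \<and> card (verts G) = k \<and>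
     (\<forall>u\<in>verts G. \<forall>v\<in>verts G. u \<noteq> v \<longrightarrow> {u, v} \<in># G)"

end

theory Submission
  imports Defs
begin

text \<open>Deleting a vertex v of an edge e splits G into the star at v and G - v. The star
contains no cycle, so it has at most ex(G) edges; an acyclic subgraph of G - v stays acyclic
when all copies of e are added, so ex(G - v) < ex(G). Induction gives
2 e(G) \<le> ex(G) (ex(G) + 1), i.e. e(G) \<le> C(k, 2) whenever ex(G) < k. In the equality case
every step is tight: each edge is simple and each vertex has degree k - 1, so the degree sum
forces exactly k vertices and G = K_k. Conversely ex(K_k) < k, because a forest has fewer
edges than vertices (an endpoint of a longest path is a leaf).\<close>

lemma card_2_elemE:
  assumes "card e = 2" "x \<in> e"
  obtains y where "e = {x, y}" "y \<noteq> x"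
  using assms by (auto simp: card_2_iff)

lemma finite_Union_card_2: "finite E \<Longrightarrow> \<forall>e\<in>E. card e = 2 \<Longrightarrow> finite (\<Union>E)"
  using card.infinite by (intro finite_Union) fastforce+

lemma finite_verts: "multigraph G \<Longrightarrow> finite (verts G)"
  unfolding multigraph_def verts_def by (intro finite_Union_card_2) auto

lemma multigraph_edge_nonempty: "multigraph G \<Longrightarrow> e \<in># G \<Longrightarrow> e \<noteq> {}"
  unfolding multigraph_def by fastforce

lemma size_eq_card_set_mset:
  assumes "\<And>x. count M x \<le> 1"
  shows "size M = card (set_mset M)"
proof -
  have "M = mset_set (set_mset M)"
  proof (rule multiset_eqI)
    fix x show "count M x = count (mset_set (set_mset M)) x"
    proof (cases "x \<in># M")
      case True
      then have "0 < count M x" "count (mset_set (set_mset M)) x = 1" by simp_all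
      then show ?thesis using assms[of x] by linarith
    qed (simp add: not_in_iff)
  qed
  then have "size M = size (mset_set (set_mset M))" by (rule arg_cong)
  then show ?thesis by simp
qed

lemma twice_choose_two: "2 * (n choose 2) = n * (n - 1)"
proof (induction n)
  case (Suc n)
  then have "2 * (Suc n choose 2) = 2 * n + n * (n - 1)" by (simp add: numeral_2_eq_2)
  also have "\<dots> = Suc n * (Suc n - 1)" by (cases n) (auto simp: algebra_simps)
  finally show ?case .
qed simp

definition is_cycle_in :: "'a set multiset \<Rightarrow> 'a list \<Rightarrow> bool" where
  "is_cycle_in H vs \<longleftrightarrow> length vs \<ge> 3 \<and> distinct vs \<and>
     (\<forall>i < length vs. {vs ! i, vs ! ((i + 1) mod length vs)} \<in># H)"

lemma has_cycle_iff_is_cycle_in: "has_cycle H \<longleftrightarrow> (\<exists>vs. is_cycle_in H vs)"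
  unfolding has_cycle_def is_cycle_in_def ..

lemma has_cycle_mono: "has_cycle H \<Longrightarrow> set_mset H \<subseteq> set_mset G \<Longrightarrow> has_cycle G"
  unfolding has_cycle_def by blast

lemma not_has_cycle_empty: "\<not> has_cycle {#}"
  unfolding has_cycle_def by force

lemma is_cycle_in_neighbours:
  assumes "is_cycle_in H vs" "x \<in> set vs"
  obtains a b where "a \<noteq> b" "a \<noteq> x" "b \<noteq> x" "{a, x} \<in># H" "{x, b} \<in># H"
proof -
  define n where "n = length vs"
  have n3: "n \<ge> 3" and edge: "\<And>i. i < n \<Longrightarrow> {vs ! i, vs ! ((i + 1) mod n)} \<in># H"
    using assms(1) unfolding is_cycle_in_def n_def by auto
  have inj: "vs ! j = vs ! l \<longleftrightarrow> j = l" if "j < n" "l < n" for j l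
    using assms(1) that nth_eq_iff_index_eq unfolding is_cycle_in_def n_def by blast
  obtain i where i: "i < n" "vs ! i = x"
    using assms(2) unfolding n_def by (auto simp: in_set_conv_nth)
  define p where "p = (if i = 0 then n - 1 else i - 1)"
  define s where "s = (i + 1) mod n"
  have idx: "p < n" "s < n" "(p + 1) mod n = i" "p \<noteq> i" "s \<noteq> i" "p \<noteq> s"
    using i n3 unfolding p_def s_def by (auto simp: mod_if)
  show ?thesis
  proof (rule that[of "vs ! p" "vs ! s"])
    show "{vs ! p, x} \<in># H" using edge[of p] idx i by simp
    show "{x, vs ! s} \<in># H" using edge[of i] i unfolding s_def by simp
  qed (use idx i inj in auto)
qed

definition incident_edges :: "'a set multiset \<Rightarrow> 'a \<Rightarrow> 'a set multiset" where
  "incident_edges G v = {#e \<in># G. v \<in> e#}"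

definition delete_vertex :: "'a set multiset \<Rightarrow> 'a \<Rightarrow> 'a set multiset" where
  "delete_vertex G v = {#e \<in># G. v \<notin> e#}"

lemma size_incident_edges_delete_vertex:
  "size G = size (incident_edges G v) + size (delete_vertex G v)"
  unfolding incident_edges_def delete_vertex_def by (metis multiset_partition size_union)

lemma multigraph_delete_vertex: "multigraph G \<Longrightarrow> multigraph (delete_vertex G v)"
  unfolding multigraph_def delete_vertex_def by simp

lemma incident_edges_not_has_cycle: "\<not> has_cycle (incident_edges G v)"
proof
  assume "has_cycle (incident_edges G v)"
  then obtain vs where cyc: "is_cycle_in (incident_edges G v) vs"
    by (auto simp: has_cycle_iff_is_cycle_in)
  then have "card (set vs) \<ge> 3" by (simp add: is_cycle_in_def distinct_card)
  then have "\<not> set vs \<subseteq> {v}" using card_mono[of "{v}" "set vs"] by auto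
  then obtain x where "x \<in> set vs" "x \<noteq> v" by blast
  then show False
    using is_cycle_in_neighbours[OF cyc] unfolding incident_edges_def by auto
qed

text \<open>Parallel edges form no cycle, since a cycle has at least three distinct vertices.\<close>

lemma not_has_cycle_add_pendant_edges:
  assumes "\<not> has_cycle H" "\<forall>e\<in>#H. v \<notin> e" "u \<noteq> v"
  shows "\<not> has_cycle (H + replicate_mset m {v, u})"
proof
  assume "has_cycle (H + replicate_mset m {v, u})"
  then obtain vs where cyc: "is_cycle_in (H + replicate_mset m {v, u}) vs"
    by (auto simp: has_cycle_iff_is_cycle_in)
  show False
  proof (cases "v \<in> set vs")
    case True
    then obtain a b where "a \<noteq> b" "{a, v} \<in># H + replicate_mset m {v, u}"
        "{v, b} \<in># H + replicate_mset m {v, u}"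
      using is_cycle_in_neighbours[OF cyc] by metis
    then have "{a, v} = {v, u}" "{v, b} = {v, u}" using assms(2) by (auto split: if_splits)
    then show False using \<open>a \<noteq> b\<close> by (metis doubleton_eq_iff)
  next
    case False
    have "{vs ! i, vs ! ((i + 1) mod length vs)} \<in># H" if "i < length vs" for i
    proof -
      have "(i + 1) mod length vs < length vs" using that by (intro mod_less_divisor) linarith
      then have "v \<notin> {vs ! i, vs ! ((i + 1) mod length vs)}" using False that by (auto dest: nth_mem)
      moreover have "{vs ! i, vs ! ((i + 1) mod length vs)} \<in># H + replicate_mset m {v, u}"
        using cyc that unfolding is_cycle_in_def by blast
      ultimately show ?thesis by (auto split: if_splits)
    qed
    then have "is_cycle_in H vs" using cyc unfolding is_cycle_in_def by blast
    then show False using assms(1) by (auto simp: has_cycle_iff_is_cycle_in)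
  qed
qed

lemma finite_acyclic_sizes: "finite {size H | H. H \<subseteq># G \<and> \<not> has_cycle H}"
proof -
  have "{size H | H. H \<subseteq># G \<and> \<not> has_cycle H} \<subseteq> {..size G}"
    using size_mset_mono by auto
  then show ?thesis by (rule finite_subset) simp
qed

lemma size_le_ex_cycles:
  assumes "H \<subseteq># G" "\<not> has_cycle H" shows "size H \<le> ex_cycles G"
proof -
  have "size H \<in> {size H | H. H \<subseteq># G \<and> \<not> has_cycle H}" using assms by blast
  then show ?thesis unfolding ex_cycles_def by (rule Max_ge[OF finite_acyclic_sizes])
qed

lemma ex_cycles_attained:
  obtains H where "H \<subseteq># G" "\<not> has_cycle H" "size H = ex_cycles G"
proof -
  have "size {#} \<in> {size H | H. H \<subseteq># G \<and> \<not> has_cycle H}"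
    unfolding mem_Collect_eq by (intro exI[of _ "{#}"]) (simp add: not_has_cycle_empty)
  then have "{size H | H. H \<subseteq># G \<and> \<not> has_cycle H} \<noteq> {}" using equals0D by metis
  then have "ex_cycles G \<in> {size H | H. H \<subseteq># G \<and> \<not> has_cycle H}"
    unfolding ex_cycles_def by (rule Max_in[OF finite_acyclic_sizes])
  then show ?thesis unfolding mem_Collect_eq using that by metis
qed

lemma size_incident_edges_le_ex_cycles: "size (incident_edges G v) \<le> ex_cycles G"
  by (rule size_le_ex_cycles[OF _ incident_edges_not_has_cycle]) (simp add: incident_edges_def)

lemma ex_cycles_delete_vertex:
  assumes "multigraph G" "e \<in># G" "v \<in> e"
  shows "ex_cycles (delete_vertex G v) + count G e \<le> ex_cycles G"
proof -
  obtain H where H: "H \<subseteq># delete_vertex G v" "\<not> has_cycle H"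
      "size H = ex_cycles (delete_vertex G v)"
    by (rule ex_cycles_attained)
  obtain u where e: "e = {v, u}" "u \<noteq> v"
    using assms unfolding multigraph_def by (metis card_2_elemE)
  have copies: "replicate_mset (count G e) e \<subseteq># incident_edges G v"
    unfolding incident_edges_def filter_eq_replicate_mset[symmetric]
    using assms(3) by (intro filter_mset_mono_strong) auto
  have "H + replicate_mset (count G e) e \<subseteq># delete_vertex G v + incident_edges G v"
    using H(1) copies by (rule subset_mset.add_mono)
  also have "\<dots> = G"
    unfolding delete_vertex_def incident_edges_def by (metis multiset_partition add.commute)
  finally have "size (H + replicate_mset (count G e) e) \<le> ex_cycles G"
  proof (rule size_le_ex_cycles)
    show "\<not> has_cycle (H + replicate_mset (count G e) e)"
      unfolding e(1) using H(1,2) e(2)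
      by (intro not_has_cycle_add_pendant_edges)
        (auto simp: delete_vertex_def dest: mset_subset_eqD)
  qed
  then show ?thesis using H(3) by simp
qed

lemma triangular_step:
  fixes W s a c :: nat
  assumes "s \<le> W" "a + c \<le> W" "1 \<le> c"
  shows triangular_step_le: "2 * s + a * (a + 1) \<le> W * (W + 1)"
    and triangular_step_eq: "W * (W + 1) \<le> 2 * s + a * (a + 1) \<Longrightarrow> s = W \<and> c = 1"
proof -
  obtain w where W: "W = Suc w" and "a \<le> w" using assms(2,3) by (cases W) auto
  then have aw: "a * (a + 1) \<le> w * (w + 1)" by (intro mult_le_mono) auto
  then show "2 * s + a * (a + 1) \<le> W * (W + 1)" using assms(1) W by simp
  assume tight: "W * (W + 1) \<le> 2 * s + a * (a + 1)"
  have "c = 1"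
  proof (rule ccontr)
    assume "c \<noteq> 1"
    then obtain w' where W': "W = w' + 2" and "a \<le> w'" using assms(2,3) W by (cases w) auto
    then have "a * (a + 1) \<le> w' * (w' + 1)" by (intro mult_le_mono) auto
    then show False using tight assms(1) W' by (simp add: algebra_simps)
  qed
  moreover have "s = W" using tight aw assms(1) W by (simp add: algebra_simps)
  ultimately show "s = W \<and> c = 1" by simp
qed

lemma twice_size_le_ex_cycles:
  "multigraph G \<Longrightarrow> 2 * size G \<le> ex_cycles G * (ex_cycles G + 1)"
proof (induction "size G" arbitrary: G rule: less_induct)
  case less
  show ?case
  proof (cases "G = {#}")
    case False
    then obtain e where e: "e \<in># G" by blast
    then obtain v where v: "v \<in> e" using multigraph_edge_nonempty[OF less.prems] by blast
    let ?S = "incident_edges G v" and ?R = "delete_vertex G v"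
    have "e \<in># ?S" using e v by (simp add: incident_edges_def)
    then have "size ?R < size G"
      using size_incident_edges_delete_vertex[of G v] nonempty_has_size by fastforce
    then have IH: "2 * size ?R \<le> ex_cycles ?R * (ex_cycles ?R + 1)"
      using multigraph_delete_vertex[OF less.prems] by (rule less.hyps)
    have "2 * size G = 2 * size ?S + 2 * size ?R"
      using size_incident_edges_delete_vertex[of G v] by simp
    also have "\<dots> \<le> 2 * size ?S + ex_cycles ?R * (ex_cycles ?R + 1)"
      using IH by simp
    also have "\<dots> \<le> ex_cycles G * (ex_cycles G + 1)"
      using size_incident_edges_le_ex_cycles ex_cycles_delete_vertex[OF less.prems e v]
      by (rule triangular_step_le) (use e in simp)
    finally show ?thesis .
  qed simp
qed

lemma size_le_choose_two:
  assumes "multigraph G" "ex_cycles G < k"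
  shows "size G \<le> k choose 2"
proof -
  have "ex_cycles G * (ex_cycles G + 1) \<le> (k - 1) * k"
    using assms(2) by (intro mult_le_mono) auto
  then show ?thesis
    using twice_size_le_ex_cycles[OF assms(1)] twice_choose_two[of k] by (simp add: mult.commute)
qed

lemma ex_cycles_tight:
  assumes "multigraph G" "ex_cycles G \<le> W" "2 * size G = W * (W + 1)" "e \<in># G" "v \<in> e"
  shows "count G e = 1 \<and> size (incident_edges G v) = W"
proof -
  let ?S = "incident_edges G v" and ?R = "delete_vertex G v"
  have "W * (W + 1) = 2 * size ?S + 2 * size ?R"
    using assms(3) size_incident_edges_delete_vertex[of G v] by simp
  also have "\<dots> \<le> 2 * size ?S + ex_cycles ?R * (ex_cycles ?R + 1)"
    using twice_size_le_ex_cycles[OF multigraph_delete_vertex[OF assms(1)]] by simp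
  finally have tight: "W * (W + 1) \<le> 2 * size ?S + ex_cycles ?R * (ex_cycles ?R + 1)" .
  have "size ?S \<le> W"
    using size_incident_edges_le_ex_cycles assms(2) by (rule le_trans)
  moreover have "ex_cycles ?R + count G e \<le> W"
    using ex_cycles_delete_vertex[OF assms(1,4,5)] assms(2) by (rule le_trans)
  moreover have "1 \<le> count G e" using assms(4) by (simp add: Suc_le_eq)
  ultimately show ?thesis using triangular_step_eq[OF _ _ _ tight] by blast
qed

lemma sum_size_incident_edges:
  assumes "finite V" "\<forall>e\<in>#G. e \<subseteq> V" "multigraph G"
  shows "(\<Sum>v\<in>V. size (incident_edges G v)) = 2 * size G"
  using assms(2,3)
proof (induction G)
  case (add x G)
  have "x \<subseteq> V" "card x = 2" using add.prems unfolding multigraph_def by auto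
  have "(\<Sum>v\<in>V. size (incident_edges (add_mset x G) v))
      = (\<Sum>v\<in>V. (if v \<in> x then 1 else 0) + size (incident_edges G v))"
    by (intro sum.cong) (auto simp: incident_edges_def)
  also have "\<dots> = card (V \<inter> x) + 2 * size G"
    using add assms(1) by (simp add: sum.distrib sum.If_cases multigraph_def)
  also have "V \<inter> x = x" using \<open>x \<subseteq> V\<close> by blast
  finally show ?case using \<open>card x = 2\<close> by simp
qed (simp add: incident_edges_def)

lemma adjacent_if_full_degree:
  assumes "simple_graph G" "u \<in> verts G" "v \<in> verts G" "u \<noteq> v"
    and "size (incident_edges G v) = card (verts G) - 1"
  shows "{u, v} \<in># G"
proof -
  have mg: "multigraph G" and simple: "\<And>e. count G e \<le> 1"
    using assms(1) unfolding simple_graph_def by auto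
  have fin: "finite (verts G)" using mg by (rule finite_verts)
  let ?N = "(\<lambda>w. {v, w}) ` (verts G - {v})"
  have sub: "set_mset (incident_edges G v) \<subseteq> ?N"
  proof
    fix e assume "e \<in># incident_edges G v"
    then have e: "e \<in># G" "v \<in> e" by (auto simp: incident_edges_def)
    then obtain w where w: "e = {v, w}" "w \<noteq> v"
      using mg card_2_elemE unfolding multigraph_def by metis
    then have "w \<in> verts G" using e(1) unfolding verts_def by blast
    then show "e \<in> ?N" using w by blast
  qed
  have "card ?N \<le> card (verts G) - 1"
    using card_image_le[of "verts G - {v}" "\<lambda>w. {v, w}"] fin assms(3) by simp
  moreover have "card (set_mset (incident_edges G v)) = card (verts G) - 1"
    using assms(5) size_eq_card_set_mset[of "incident_edges G v"] simple
    by (simp add: incident_edges_def le_trans[OF _ simple])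
  ultimately have "set_mset (incident_edges G v) = ?N"
    using sub fin by (intro card_seteq) auto
  moreover have "{v, u} \<in> ?N" using assms(2,4) by blast
  ultimately show ?thesis by (auto simp: incident_edges_def insert_commute)
qed

lemma extremal_multigraph_is_complete_graph:
  assumes "multigraph G" "ex_cycles G < k" "size G = k choose 2" "k \<ge> 2"
  shows "is_complete_graph G k"
proof -
  have twice: "2 * size G = (k - 1) * (k - 1 + 1)"
    using assms(3,4) twice_choose_two[of k] by (simp add: mult.commute)
  have tight: "count G e = 1 \<and> size (incident_edges G v) = k - 1" if "e \<in># G" "v \<in> e" for e v
    using assms(1) _ twice that by (rule ex_cycles_tight) (use assms(2) in simp)
  have "count G e \<le> 1" for e
  proof (cases "e \<in># G")
    case True
    then obtain v where "v \<in> e" using multigraph_edge_nonempty[OF assms(1)] by blast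
    then show ?thesis using tight[OF True] by simp
  qed (simp add: not_in_iff)
  then have simple: "simple_graph G" using assms(1) unfolding simple_graph_def by blast
  have degree: "size (incident_edges G v) = k - 1" if "v \<in> verts G" for v
    using that tight unfolding verts_def by blast
  have "card (verts G) * (k - 1) = (\<Sum>v\<in>verts G. size (incident_edges G v))"
    using degree by simp
  also have "\<dots> = 2 * size G"
    using finite_verts[OF assms(1)] assms(1) by (intro sum_size_incident_edges) (auto simp: verts_def)
  also have "\<dots> = k * (k - 1)" using twice assms(4) by simp
  finally have card: "card (verts G) = k" using assms(4) by simp
  show ?thesis
    unfolding is_complete_graph_def
  proof (intro conjI ballI impI)
    fix u v assume uv: "u \<in> verts G" "v \<in> verts G" "u \<noteq> v"
    show "{u, v} \<in># G"
      by (rule adjacent_if_full_degree[OF simple uv]) (simp add: degree[OF uv(2)] card)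
  qed (use simple card in auto)
qed

definition is_path_in :: "'a set set \<Rightarrow> 'a list \<Rightarrow> bool" where
  "is_path_in E p \<longleftrightarrow> distinct p \<and> (\<forall>i. Suc i < length p \<longrightarrow> {p ! i, p ! Suc i} \<in> E)"

lemma set_path_subset_Union:
  assumes "is_path_in E p" "2 \<le> length p"
  shows "set p \<subseteq> \<Union>E"
proof
  fix z assume "z \<in> set p"
  then obtain i where i: "i < length p" "p ! i = z" by (auto simp: in_set_conv_nth)
  show "z \<in> \<Union>E"
  proof (cases "Suc i < length p")
    case True
    then show ?thesis using assms(1) i unfolding is_path_in_def by blast
  next
    case False
    then have "Suc (i - 1) < length p" "Suc (i - 1) = i" using i assms(2) by auto
    then have "{p ! (i - 1), z} \<in> E" using assms(1) i(2) unfolding is_path_in_def by metis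
    then show ?thesis by blast
  qed
qed

lemma is_path_in_snoc:
  assumes "is_path_in E p" "p \<noteq> []" "y \<notin> set p" "{last p, y} \<in> E"
  shows "is_path_in E (p @ [y])"
  unfolding is_path_in_def
proof (intro conjI allI impI)
  show "distinct (p @ [y])" using assms(1,3) unfolding is_path_in_def by simp
  fix i assume "Suc i < length (p @ [y])"
  then consider "Suc i < length p" | "i = length p - 1" by fastforce
  then show "{(p @ [y]) ! i, (p @ [y]) ! Suc i} \<in> E"
  proof cases
    case 1
    then show ?thesis using assms(1) unfolding is_path_in_def by (simp add: nth_append)
  next
    case 2
    then show ?thesis using assms(2,4) by (simp add: nth_append last_conv_nth)
  qed
qed

lemma has_cycle_path_closing_edge:
  assumes "finite E" "is_path_in E p" "i + 2 < length p" "{last p, p ! i} \<in> E"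
  shows "has_cycle (mset_set E)"
  unfolding has_cycle_iff_is_cycle_in is_cycle_in_def
proof (intro exI[of _ "drop i p"] conjI allI impI)
  show "3 \<le> length (drop i p)" "distinct (drop i p)"
    using assms(2,3) unfolding is_path_in_def by auto
  fix j assume j: "j < length (drop i p)"
  show "{drop i p ! j, drop i p ! ((j + 1) mod length (drop i p))} \<in># mset_set E"
  proof (cases "Suc j < length (drop i p)")
    case True
    then show ?thesis using assms(1,2) unfolding is_path_in_def by simp
  next
    case False
    then have "j + 1 = length (drop i p)" using j by simp
    then have "i + j = length p - 1" using j by simp
    moreover have "last p = p ! (length p - 1)" using assms(3) by (intro last_conv_nth) auto
    ultimately show ?thesis
      using assms(1,4) \<open>j + 1 = length (drop i p)\<close> by (simp add: insert_commute)
  qed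
qed

lemma longest_pathE:
  assumes "finite E" "\<forall>e\<in>E. card e = 2" "E \<noteq> {}"
  obtains p where "is_path_in E p" "2 \<le> length p"
    "\<And>q. is_path_in E q \<Longrightarrow> 2 \<le> length q \<Longrightarrow> length q \<le> length p"
proof -
  obtain e0 where e0: "e0 \<in> E" using assms(3) by blast
  then obtain a b where "e0 = {a, b}" "a \<noteq> b" using assms(2) card_2_iff by meson
  then have "is_path_in E [a, b]" using e0 unfolding is_path_in_def by (auto simp: less_Suc_eq)
  then have path2: "is_path_in E [a, b] \<and> 2 \<le> length [a, b]" by simp
  have "\<forall>q. is_path_in E q \<and> 2 \<le> length q \<longrightarrow> length q < Suc (card (\<Union>E))"
  proof (intro allI impI, elim conjE)
    fix q assume q: "is_path_in E q" "2 \<le> length q"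
    have "finite (\<Union>E)" using assms(1,2) by (rule finite_Union_card_2)
    then have "card (set q) \<le> card (\<Union>E)" using set_path_subset_Union[OF q] by (rule card_mono)
    then show "length q < Suc (card (\<Union>E))"
      using q(1) distinct_card[of q] unfolding is_path_in_def by simp
  qed
  from ex_has_greatest_nat[OF path2 this] show ?thesis using that by blast
qed

lemma acyclic_has_leaf:
  assumes "finite E" "\<forall>e\<in>E. card e = 2" "\<not> has_cycle (mset_set E)" "E \<noteq> {}"
  obtains e x where "e \<in> E" "x \<in> e" "\<And>e'. e' \<in> E \<Longrightarrow> x \<in> e' \<Longrightarrow> e' = e"
proof -
  obtain p where p: "is_path_in E p" "2 \<le> length p"
    and longest: "\<And>q. is_path_in E q \<Longrightarrow> 2 \<le> length q \<Longrightarrow> length q \<le> length p"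
    using longest_pathE[OF assms(1,2,4)] by blast
  define n where "n = length p"
  define x where "x = last p"
  define u where "u = p ! (n - 2)"
  have x: "x = p ! (n - 1)" using p(2) unfolding x_def n_def by (intro last_conv_nth) auto
  have "{u, x} \<in> E"
  proof -
    have "Suc (n - 2) < length p" "Suc (n - 2) = n - 1" using p(2) unfolding n_def by auto
    then show ?thesis using p(1) unfolding is_path_in_def u_def x by metis
  qed
  moreover have "e' = {u, x}" if e': "e' \<in> E" "x \<in> e'" for e'
  proof -
    obtain y where y: "e' = {x, y}" "y \<noteq> x" using e' assms(2) card_2_elemE by metis
    show ?thesis
    proof (cases "y \<in> set p")
      case False
      then have "is_path_in E (p @ [y])"
        using p e' y by (intro is_path_in_snoc) (auto simp: x_def)
      then show ?thesis using longest[of "p @ [y]"] p(2) unfolding n_def by simp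
    next
      case True
      then obtain i where i: "i < n" "p ! i = y" unfolding n_def by (auto simp: in_set_conv_nth)
      have "i \<noteq> n - 1" using i(2) y(2) x by auto
      consider "i = n - 2" | "i + 2 < n" using i(1) \<open>i \<noteq> n - 1\<close> by linarith
      then show ?thesis
      proof cases
        case 1
        then show ?thesis using y i(2) u_def by auto
      next
        case 2
        then have "has_cycle (mset_set E)"
          using assms(1) p(1) e' y i(2) unfolding n_def
          by (intro has_cycle_path_closing_edge) (auto simp: x_def)
        then show ?thesis using assms(3) by contradiction
      qed
    qed
  qed
  ultimately show ?thesis using that by blast
qed

lemma acyclic_card_less_card_Union:
  assumes "finite E" "\<forall>e\<in>E. card e = 2" "\<not> has_cycle (mset_set E)" "E \<noteq> {}"
  shows "card E < card (\<Union>E)"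
  using assms
proof (induction "card E" arbitrary: E rule: less_induct)
  case less
  have finU: "finite (\<Union>E)" using less.prems(1,2) by (rule finite_Union_card_2)
  obtain e x where e: "e \<in> E" "x \<in> e" and leaf: "\<And>e'. e' \<in> E \<Longrightarrow> x \<in> e' \<Longrightarrow> e' = e"
    using acyclic_has_leaf[OF less.prems] by blast
  show ?case
  proof (cases "E - {e} = {}")
    case True
    then have "E = {e}" using e(1) by blast
    moreover have "card e = 2" using less.prems(2) e(1) by blast
    ultimately show ?thesis by simp
  next
    case False
    have card_E: "card (E - {e}) = card E - 1" "0 < card E"
      using less.prems(1) e(1) card_gt_0_iff by auto
    have "\<not> has_cycle (mset_set (E - {e}))"
      using less.prems(1,3) has_cycle_mono[of "mset_set (E - {e})" "mset_set E"] by auto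
    then have IH: "card (E - {e}) < card (\<Union>(E - {e}))"
      using less.prems(1,2) False card_E by (intro less.hyps) auto
    have "\<Union>(E - {e}) \<subseteq> \<Union>E - {x}" using leaf by blast
    then have "card (\<Union>(E - {e})) \<le> card (\<Union>E) - 1"
      using finU e by (metis card_Diff_singleton card_mono finite_Diff UnionI)
    then show ?thesis using IH card_E by linarith
  qed
qed

definition complete_graph :: "'a set \<Rightarrow> 'a set multiset" where
  "complete_graph V = mset_set {e. e \<subseteq> V \<and> card e = 2}"

lemma mem_complete_graph:
  "finite V \<Longrightarrow> e \<in># complete_graph V \<longleftrightarrow> e \<subseteq> V \<and> card e = 2"
  unfolding complete_graph_def by (simp add: finite_subset[of _ "Pow V"] subset_eq)

lemma size_complete_graph: "finite V \<Longrightarrow> size (complete_graph V) = card V choose 2"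
  unfolding complete_graph_def by (simp add: n_subsets)

lemma simple_graph_complete_graph: "finite V \<Longrightarrow> simple_graph (complete_graph V)"
  unfolding simple_graph_def multigraph_def
  by (simp add: mem_complete_graph) (simp add: complete_graph_def count_mset_set')

lemma ex_cycles_complete_graph_less:
  assumes "finite V" "V \<noteq> {}"
  shows "ex_cycles (complete_graph V) < card V"
proof -
  obtain H where H: "H \<subseteq># complete_graph V" "\<not> has_cycle H" "size H = ex_cycles (complete_graph V)"
    by (rule ex_cycles_attained)
  have edges: "e \<subseteq> V \<and> card e = 2" if "e \<in># H" for e
  proof -
    have "e \<in># complete_graph V" using H(1) that by (rule mset_subset_eqD)
    then show ?thesis using assms(1) by (simp add: mem_complete_graph)
  qed
  have "size H = card (set_mset H)"
  proof (rule size_eq_card_set_mset)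
    fix e show "count H e \<le> 1"
      using mset_subset_eq_count[OF H(1), of e] simple_graph_complete_graph[OF assms(1)]
      unfolding simple_graph_def by (meson le_trans)
  qed
  also have "\<dots> < card V"
  proof (cases "H = {#}")
    case False
    have "card (set_mset H) < card (\<Union>(set_mset H))"
      using edges H(2) False has_cycle_mono[of "mset_set (set_mset H)" H]
      by (intro acyclic_card_less_card_Union) auto
    also have "\<dots> \<le> card V" using edges assms(1) by (intro card_mono) auto
    finally show ?thesis .
  qed (use assms in \<open>simp add: card_gt_0_iff\<close>)
  finally show ?thesis using H(3) by simp
qed

lemma Sup_size_ex_cycles_less:
  fixes K :: "'a set multiset"
  assumes "\<And>G. P G \<Longrightarrow> multigraph G" "P K" "ex_cycles K < k" "size K = k choose 2"
  shows "Sup {enat (size G) | G. P G \<and> ex_cycles G < k} = enat (k choose 2)"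
proof (rule antisym)
  show "Sup {enat (size G) | G. P G \<and> ex_cycles G < k} \<le> enat (k choose 2)"
  proof (rule Sup_least)
    fix x assume "x \<in> {enat (size G) | G. P G \<and> ex_cycles G < k}"
    then obtain G where "x = enat (size G)" "P G" "ex_cycles G < k" by blast
    then show "x \<le> enat (k choose 2)" using size_le_choose_two[OF assms(1)] by simp
  qed
  show "enat (k choose 2) \<le> Sup {enat (size G) | G. P G \<and> ex_cycles G < k}"
    using assms(2-4) by (intro Sup_upper) (auto simp flip: assms(4))
qed

theorem theorem3p8:
  fixes k :: nat
  assumes "k \<ge> 2"
  shows "E_cyc k = enat (k choose 2) \<and> E_cyc_multi k = enat (k choose 2) \<and>
    (\<forall>G :: 'a set multiset. multigraph G \<and> ex_cycles G < k \<and> size G = k choose 2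
        \<longrightarrow> is_complete_graph G k)"
proof (intro conjI allI impI)
  let ?K = "complete_graph {0..<k}"
  have K: "simple_graph ?K" "ex_cycles ?K < k" "size ?K = k choose 2"
    using assms simple_graph_complete_graph ex_cycles_complete_graph_less[of "{0..<k}"]
      size_complete_graph[of "{0..<k}"] by auto
  show "E_cyc k = enat (k choose 2)"
    unfolding E_cyc_def by (rule Sup_size_ex_cycles_less) (use K in \<open>auto simp: simple_graph_def\<close>)
  show "E_cyc_multi k = enat (k choose 2)"
    unfolding E_cyc_multi_def by (rule Sup_size_ex_cycles_less) (use K in \<open>auto simp: simple_graph_def\<close>)
  fix G :: "'a set multiset"
  assume "multigraph G \<and> ex_cycles G < k \<and> size G = k choose 2"
  then show "is_complete_graph G k" using extremal_multigraph_is_complete_graph assms by blast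
qed

end
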